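(* Let $G$ be a (finite, or countable locally finite) cavity-monotone network such that for every $t>0$ the cavity equation $\mathbf x=t\Gamma_G(\mathbf x)$ has a unique globally attractive solution $\mathbf x(t)$. Then for all $0<s\le t$, $$\frac{s}{t}\,\mathbf x(t)\le\mathbf x(s)\le\mathbf x(t)$$ coordinatewise. In particular $t\mapsto\mathbf x(t)$ is continuous on $(0,\infty)$.
   Context: Measures over subsets: for a finite set $E$, a measure is $\mu:2^E\to[0,\infty)$; $Z(\mathbf w)=\sum_{F\subseteq E}\mu(F)\mathbf w^F$, $\mathbf w^F=\prod_{e\in F}w_e$; the cavity ratio is $\Gamma^e_\mu(\mathbf w')=Z^{/e}(\mathbf w')/Z^{\setminus e}(\mathbf w')$ where $Z^{\setminus e}(\mathbf w')=\sum_{F\not\ni e}\mu(F)\mathbf w'^F$, $Z^{/e}(\mathbf w')=\sum_{F\not\ni e}\mu(F\cup\{e\})\mathbf w'^F$; for $\mathbf w\in(0,\infty)^E$, $\mathbb P^{\mathbf w}_\mu(\mathcal F=F)=\mu(F)\mathbf w^F/Z(\mathbf w)$. $\mu$ is Rayleigh if for all $\mathbf w\in(0,\infty)^E$, $e\neq f$: $\mathbb P^{\mathbf w}_\mu(e,f\in\mathcal F)\le\mathbb P^{\mathbf w}_\mu(e\in\mathcal F)\mathbb P^{\mathbf w}_\mu(f\in\mathcal F)$; size-increasing if for all $\mathbf w\in(0,\infty)^E$, $e\in E$: $\mathbb E^{\mathbf w}_\mu[|\mathcal F|\mathbf 1_{e\in\mathcal F}]>\mathbb E^{\mathbf w}_\mu|\mathcal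 F|\,\mathbb P^{\mathbf w}_\mu(e\in\mathcal F)$; cavity-monotone if $\mu(\emptyset)>0$, Rayleigh and size-increasing. Networks: a network is a simple locally finite graph $G=(V,E)$ with, for each $i\in V$, a local measure $\mu_i$ over the subsets of $E_i$ (edges incident to $i$); cavity-monotone if every $\mu_i$ is; $\partial i$ is the set of neighbours of $i$. Configurations $\mathbf x\in[0,\infty)^{\vec E}$; cavity operator $\Gamma_G(\mathbf x)_{i\to j}=\Gamma^{ij}_{\mu_i}(x_{k\to i}:k\in\partial i\setminus\{j\})$; cavity equation at activity $t$: $\mathbf x=t\Gamma_G(\mathbf x)$; a solution is globally attractive if the iterates of $t\Gamma_G$ from any configuration converge coordinatewise to it. *)

theory Defs
  imports Complex_Main "HOL-Library.Countable"
begin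

text \<open>A measure over the subsets of E is mu :: 'e set => real, nonnegative on Pow E.
  Weights w :: 'e => real; only the values on E matter.\<close>

definition wpow :: "('e \<Rightarrow> real) \<Rightarrow> 'e set \<Rightarrow> real" where
  "wpow w F = (\<Prod>e\<in>F. w e)"

definition partfun :: "('e set \<Rightarrow> real) \<Rightarrow> 'e set \<Rightarrow> ('e \<Rightarrow> real) \<Rightarrow> real" where
  "partfun mu E w = (\<Sum>F\<in>Pow E. mu F * wpow w F)"

definition partfun_del :: "('e set \<Rightarrow> real) \<Rightarrow> 'e set \<Rightarrow> 'e \<Rightarrow> ('e \<Rightarrow> real) \<Rightarrow> real" where
  "partfun_del mu E e w = (\<Sum>F\<in>{F\<in>Pow E. e \<notin> F}. mu F * wpow w F)"

definition partfun_con :: "('e set \<Rightarrow> real) \<Rightarrow> 'e set \<Rightarrow> 'e \<Rightarrow> ('e \<Rightarrow> real) \<Rightarrow> real" where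
  "partfun_con mu E e w = (\<Sum>F\<in>{F\<in>Pow E. e \<notin> F}. mu (insert e F) * wpow w F)"

definition cavity_ratio :: "('e set \<Rightarrow> real) \<Rightarrow> 'e set \<Rightarrow> 'e \<Rightarrow> ('e \<Rightarrow> real) \<Rightarrow> real" where
  "cavity_ratio mu E e w = partfun_con mu E e w / partfun_del mu E e w"

definition prob_set :: "('e set \<Rightarrow> real) \<Rightarrow> 'e set \<Rightarrow> ('e \<Rightarrow> real) \<Rightarrow> 'e set \<Rightarrow> real" where
  "prob_set mu E w F = mu F * wpow w F / partfun mu E w"

definition expect :: "('e set \<Rightarrow> real) \<Rightarrow> 'e set \<Rightarrow> ('e \<Rightarrow> real) \<Rightarrow> ('e set \<Rightarrow> real) \<Rightarrow> real" where
  "expect mu E w g = (\<Sum>F\<in>Pow E. g F * prob_set mu E w F)"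

definition prob_contains :: "('e set \<Rightarrow> real) \<Rightarrow> 'e set \<Rightarrow> ('e \<Rightarrow> real) \<Rightarrow> 'e set \<Rightarrow> real" where
  "prob_contains mu E w S = (\<Sum>F\<in>{F\<in>Pow E. S \<subseteq> F}. prob_set mu E w F)"

definition pos_weights :: "'e set \<Rightarrow> ('e \<Rightarrow> real) \<Rightarrow> bool" where
  "pos_weights E w \<longleftrightarrow> (\<forall>e\<in>E. w e > 0)"

definition is_measure :: "('e set \<Rightarrow> real) \<Rightarrow> 'e set \<Rightarrow> bool" where
  "is_measure mu E \<longleftrightarrow> finite E \<and> (\<forall>F\<in>Pow E. mu F \<ge> 0)"

definition rayleigh :: "('e set \<Rightarrow> real) \<Rightarrow> 'e set \<Rightarrow> bool" where
  "rayleigh mu E \<longleftrightarrow> (\<forall>w. pos_weights E w \<longrightarrow> (\<forall>e\<in>E. \<forall>f\<in>E. e \<noteq> f \<longrightarrow>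
      prob_contains mu E w {e, f} \<le> prob_contains mu E w {e} * prob_contains mu E w {f}))"

definition size_increasing :: "('e set \<Rightarrow> real) \<Rightarrow> 'e set \<Rightarrow> bool" where
  "size_increasing mu E \<longleftrightarrow> (\<forall>w. pos_weights E w \<longrightarrow> (\<forall>e\<in>E.
      expect mu E w (\<lambda>F. real (card F) * (if e \<in> F then 1 else 0))
        > expect mu E w (\<lambda>F. real (card F)) * prob_contains mu E w {e}))"

definition cavity_monotone :: "('e set \<Rightarrow> real) \<Rightarrow> 'e set \<Rightarrow> bool" where
  "cavity_monotone mu E \<longleftrightarrow> is_measure mu E \<and> mu {} > 0 \<and> rayleigh mu E \<and> size_increasing mu E"

text \<open>A simple, locally finite graph on a countable vertex type 'v (vertex set = UNIV),
  given by a symmetric irreflexive adjacency relation. Edges are the 2-sets {i,j}.\<close>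

definition simple_lf_graph :: "('v \<Rightarrow> 'v \<Rightarrow> bool) \<Rightarrow> bool" where
  "simple_lf_graph adj \<longleftrightarrow> (\<forall>i j. adj i j \<longrightarrow> adj j i) \<and> (\<forall>i. \<not> adj i i)
      \<and> (\<forall>i. finite {j. adj i j})"

definition inc_edges :: "('v \<Rightarrow> 'v \<Rightarrow> bool) \<Rightarrow> 'v \<Rightarrow> 'v set set" where
  "inc_edges adj i = {{i, j} | j. adj i j}"

definition cavity_monotone_network :: "('v \<Rightarrow> 'v \<Rightarrow> bool) \<Rightarrow> ('v \<Rightarrow> 'v set set \<Rightarrow> real) \<Rightarrow> bool" where
  "cavity_monotone_network adj mu \<longleftrightarrow> simple_lf_graph adj \<and>
      (\<forall>i. cavity_monotone (mu i) (inc_edges adj i))"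

text \<open>Configurations: x i j = x_{i\<rightarrow>j}, meaningful on directed edges (adj i j).\<close>
definition configuration :: "('v \<Rightarrow> 'v \<Rightarrow> bool) \<Rightarrow> ('v \<Rightarrow> 'v \<Rightarrow> real) \<Rightarrow> bool" where
  "configuration adj x \<longleftrightarrow> (\<forall>i j. adj i j \<longrightarrow> x i j \<ge> 0)"

text \<open>Cavity operator: Gamma_G(x)_{i\<rightarrow>j} = Gamma^{ij}_{mu_i}(x_{k\<rightarrow>i} : k in \<partial>i - {j});
  the weight of the edge e = {i,k} at i is x_{k\<rightarrow>i}.\<close>
definition cavity_op :: "('v \<Rightarrow> 'v \<Rightarrow> bool) \<Rightarrow> ('v \<Rightarrow> 'v set set \<Rightarrow> real) \<Rightarrow> ('v \<Rightarrow> 'v \<Rightarrow> real) \<Rightarrow> 'v \<Rightarrow> 'v \<Rightarrow> real" where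
  "cavity_op adj mu x i j =
     cavity_ratio (mu i) (inc_edges adj i) {i, j} (\<lambda>e. x (the_elem (e - {i})) i)"

definition solves_cavity_eq :: "('v \<Rightarrow> 'v \<Rightarrow> bool) \<Rightarrow> ('v \<Rightarrow> 'v set set \<Rightarrow> real) \<Rightarrow> real \<Rightarrow> ('v \<Rightarrow> 'v \<Rightarrow> real) \<Rightarrow> bool" where
  "solves_cavity_eq adj mu t x \<longleftrightarrow> configuration adj x \<and>
      (\<forall>i j. adj i j \<longrightarrow> x i j = t * cavity_op adj mu x i j)"

definition globally_attractive :: "('v \<Rightarrow> 'v \<Rightarrow> bool) \<Rightarrow> ('v \<Rightarrow> 'v set set \<Rightarrow> real) \<Rightarrow> real \<Rightarrow> ('v \<Rightarrow> 'v \<Rightarrow> real) \<Rightarrow> bool" where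
  "globally_attractive adj mu t x \<longleftrightarrow> (\<forall>y. configuration adj y \<longrightarrow> (\<forall>i j. adj i j \<longrightarrow>
      (\<lambda>n. (((\<lambda>z a b. t * cavity_op adj mu z a b) ^^ n) y) i j) \<longlonglongrightarrow> x i j))"

end

theory Submission
  imports Defs
begin

text \<open>
  Write \<Gamma>^e(v) for the cavity ratio of a local measure.  Two local facts drive the
  proof: a Rayleigh measure has an antitone cavity ratio (raising any weight
  lowers \<Gamma>^e), and a size-increasing measure makes x \<mapsto> x \<Gamma>^e(x v)
  nondecreasing (its derivative is positive exactly by the size-increasing
  inequality).  Both are proved by expanding the relevant partition functions
  over the trace of the random set on one or two edges, first for positive
  weights and then, by continuity, for nonnegative ones.

  On a network these say that \<Gamma>_G is antitone and s \<Gamma>_G(s x) \<le> t \<Gamma>_G(t x).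
  For s \<le> t the map t \<Gamma>_G therefore sends the order interval [x(s), (t/s) x(s)]
  into itself; since its iterates from x(s) converge to x(t), we get
  x(s) \<le> x(t) \<le> (t/s) x(s).  Continuity follows from this two-sided bound.
\<close>

section \<open>Weighted subset sums\<close>

text \<open>All partition functions of the paper are instances of the weighted subset sum
  wsum g A w = \<Sum>_{F \<subseteq> A} g F w^F; splitting off one element of A is the basic
  identity used throughout.\<close>
definition wsum :: "('e set \<Rightarrow> real) \<Rightarrow> 'e set \<Rightarrow> ('e \<Rightarrow> real) \<Rightarrow> real" where
  "wsum g A w = (\<Sum>F\<in>Pow A. g F * wpow w F)"

lemma wpow_insert: "finite F \<Longrightarrow> a \<notin> F \<Longrightarrow> wpow w (insert a F) = w a * wpow w F"
  by (simp add: wpow_def)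

lemma wpow_union:
  "finite S \<Longrightarrow> finite G \<Longrightarrow> S \<inter> G = {} \<Longrightarrow> wpow w (S \<union> G) = wpow w S * wpow w G"
  by (simp add: wpow_def prod.union_disjoint)

lemma wpow_scale: "finite F \<Longrightarrow> wpow (\<lambda>x. c * w x) F = c ^ card F * wpow w F"
  by (simp add: wpow_def prod.distrib)

lemma sum_Pow_insert:
  assumes "finite A" "a \<notin> A"
  shows "sum h (Pow (insert a A)) = sum h (Pow A) + (\<Sum>F\<in>Pow A. h (insert a F))"
proof -
  have inj: "inj_on (insert a) (Pow A)"
    using assms(2) unfolding inj_on_def by (metis PowD in_mono insert_ident)
  have "sum h (Pow (insert a A)) = sum h (Pow A \<union> insert a ` Pow A)"
    by (simp add: Pow_insert)
  also have "\<dots> = sum h (Pow A) + sum h (insert a ` Pow A)"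
    using assms by (intro sum.union_disjoint) auto
  also have "sum h (insert a ` Pow A) = (\<Sum>F\<in>Pow A. h (insert a F))"
    using inj by (simp add: sum.reindex)
  finally show ?thesis .
qed

lemma wsum_insert:
  assumes "finite A" "a \<notin> A"
  shows "wsum g (insert a A) w = wsum g A w + w a * wsum (\<lambda>F. g (insert a F)) A w"
proof -
  have "(\<Sum>F\<in>Pow A. g (insert a F) * wpow w (insert a F)) = w a * wsum (\<lambda>F. g (insert a F)) A w"
    unfolding wsum_def sum_distrib_left
  proof (rule sum.cong[OF refl])
    fix F assume "F \<in> Pow A"
    then have "finite F" "a \<notin> F" using assms finite_subset by auto
    then show "g (insert a F) * wpow w (insert a F) = w a * (g (insert a F) * wpow w F)"
      by (simp add: wpow_insert)
  qed
  then show ?thesis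
    unfolding wsum_def sum_Pow_insert[OF assms] by simp
qed

lemma wsum_cong:
  assumes "\<And>F. F \<subseteq> A \<Longrightarrow> g F = g' F" and "\<And>x. x \<in> A \<Longrightarrow> w x = w' x"
  shows "wsum g A w = wsum g' A w'"
  unfolding wsum_def wpow_def using assms
  by (intro sum.cong refl arg_cong2[where f="(*)"] prod.cong) auto

lemma wsum_zero: "wsum (\<lambda>F. 0) A w = 0"
  by (simp add: wsum_def)

lemma wsum_add: "wsum (\<lambda>F. g F + h F) A w = wsum g A w + wsum h A w"
  by (simp add: wsum_def distrib_right sum.distrib)

text \<open>With a positive empty-set term and nonnegative data the sum is positive; this
  keeps every denominator (partition functions, cavity ratios) away from zero.\<close>
lemma wsum_pos:
  assumes "finite A" "g {} > 0" "\<And>F. F \<subseteq> A \<Longrightarrow> g F \<ge> 0" "\<And>x. x \<in> A \<Longrightarrow> w x \<ge> 0"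
  shows "wsum g A w > 0"
  unfolding wsum_def
proof (rule sum_pos2[where i="{}"])
  show "0 \<le> g F * wpow w F" if "F \<in> Pow A" for F
    using that assms(3,4) unfolding wpow_def by (intro mult_nonneg_nonneg prod_nonneg) auto
qed (use assms(1,2) in \<open>auto simp: wpow_def\<close>)

text \<open>Weighted sums are polynomial in the weights, hence continuous when all weights
  are shifted by \<epsilon> \<rightarrow> 0+.  This is how inequalities proved for strictly positive
  weights (as in the definitions of Rayleigh and size-increasing) pass to
  nonnegative weights, which configurations are allowed to have.\<close>
lemma tendsto_wsum:
  "((\<lambda>\<epsilon>. wsum g A (\<lambda>x. a * (w x + \<epsilon>))) \<longlongrightarrow> wsum g A (\<lambda>x. a * w x)) (at_right 0)"
proof -
  have "((\<lambda>\<epsilon>. \<Sum>F\<in>Pow A. g F * (\<Prod>x\<in>F. a * (w x + \<epsilon>)))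
          \<longlongrightarrow> (\<Sum>F\<in>Pow A. g F * (\<Prod>x\<in>F. a * (w x + 0)))) (at_right 0)"
    by (intro tendsto_intros)
  then show ?thesis by (simp add: wsum_def wpow_def)
qed

lemma partfun_eq_wsum: "partfun mu E w = wsum mu E w"
  by (simp add: partfun_def wsum_def)

lemma Pow_minus_eq: "{F \<in> Pow E. e \<notin> F} = Pow (E - {e})"
  by auto

lemma cavity_ratio_eq_wsum:
  "cavity_ratio mu E e w = wsum (\<lambda>F. mu (insert e F)) (E - {e}) w / wsum mu (E - {e}) w"
  unfolding cavity_ratio_def partfun_con_def partfun_del_def wsum_def Pow_minus_eq ..

lemma expect_eq_wsum: "expect mu E w g = wsum (\<lambda>F. g F * mu F) E w / partfun mu E w"
  by (simp add: expect_def prob_set_def wsum_def sum_divide_distrib mult.assoc)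

lemma prob_contains_eq_wsum:
  assumes "finite E" "S \<subseteq> E"
  shows "prob_contains mu E w S = wpow w S * wsum (\<lambda>F. mu (S \<union> F)) (E - S) w / partfun mu E w"
proof -
  have sup: "{F \<in> Pow E. S \<subseteq> F} = (\<lambda>G. S \<union> G) ` Pow (E - S)"
    using assms(2) by (auto intro!: image_eqI[where x="_ - S"])
  have inj: "inj_on (\<lambda>G. S \<union> G) (Pow (E - S))"
    by (rule inj_onI) blast
  have "(\<Sum>F\<in>{F \<in> Pow E. S \<subseteq> F}. mu F * wpow w F) = wpow w S * wsum (\<lambda>F. mu (S \<union> F)) (E - S) w"
    unfolding sup sum.reindex[OF inj] wsum_def sum_distrib_left
  proof (rule sum.cong[OF refl], unfold o_def)
    fix G assume "G \<in> Pow (E - S)"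
    then have "finite G" "finite S" "S \<inter> G = {}"
      using assms rev_finite_subset[of E] by auto
    then show "mu (S \<union> G) * wpow w (S \<union> G) = wpow w S * (mu (S \<union> G) * wpow w G)"
      by (simp add: wpow_union)
  qed
  then show ?thesis
    by (simp add: prob_contains_def prob_set_def sum_divide_distrib[symmetric])
qed

section \<open>Rayleigh measures: the cavity ratio is antitone\<close>

text \<open>Write A = E - {e, f} and let A0, Ae, Af, Aef be the weighted sums over A of the
  measure restricted to sets whose trace on {e, f} is empty, {e}, {f}, {e, f}.
  After clearing the denominator Z^2, the Rayleigh inequality for the pair e, f
  reduces to the cross inequality A0 Aef \<le> Ae Af.\<close>
lemma rayleigh_cross_pos:
  assumes m: "is_measure mu E" "mu {} > 0" and r: "rayleigh mu E"
    and ef: "e \<in> E" "f \<in> E" "e \<noteq> f" and w: "pos_weights E w"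
  shows "wsum mu (E - {e, f}) w * wsum (\<lambda>F. mu (insert e (insert f F))) (E - {e, f}) w
       \<le> wsum (\<lambda>F. mu (insert e F)) (E - {e, f}) w * wsum (\<lambda>F. mu (insert f F)) (E - {e, f}) w"
proof -
  define A where "A = E - {e, f}"
  define A0 where "A0 = wsum mu A w"
  define Ae where "Ae = wsum (\<lambda>F. mu (insert e F)) A w"
  define Af where "Af = wsum (\<lambda>F. mu (insert f F)) A w"
  define Aef where "Aef = wsum (\<lambda>F. mu (insert e (insert f F))) A w"
  define Z where "Z = partfun mu E w"
  have fin: "finite E" using m by (simp add: is_measure_def)
  have A: "finite A" "e \<notin> A" "f \<notin> A"
    using fin by (auto simp: A_def)
  have E_minus: "E - {e} = insert f A" "E - {f} = insert e A" "E - {e, f} = A"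
    "E = insert e (insert f A)"
    using ef by (auto simp: A_def)
  have we: "w e > 0" "w f > 0" using w ef by (auto simp: pos_weights_def)
  have Z: "Z = A0 + w f * Af + w e * (Ae + w f * Aef)"
    unfolding Z_def partfun_eq_wsum E_minus(4) using A ef(3)
    by (simp add: wsum_insert A0_def Ae_def Af_def Aef_def)
  have Zpos: "Z > 0"
    unfolding Z_def partfun_eq_wsum using m w
    by (intro wsum_pos) (auto simp: is_measure_def pos_weights_def less_imp_le)
  have Pef: "prob_contains mu E w {e, f} * Z = w e * w f * Aef"
    using fin ef Zpos E_minus(3)
    by (simp add: prob_contains_eq_wsum Z_def wpow_def Aef_def)
  have Pe: "prob_contains mu E w {e} * Z = w e * (Ae + w f * Aef)"
    using fin ef Zpos A E_minus(1)
    by (simp add: prob_contains_eq_wsum Z_def wpow_def wsum_insert Ae_def Aef_def)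
  have Pf: "prob_contains mu E w {f} * Z = w f * (Af + w e * Aef)"
    using fin ef Zpos A E_minus(2)
    by (simp add: prob_contains_eq_wsum Z_def wpow_def wsum_insert Af_def Aef_def insert_commute)
  have "prob_contains mu E w {e, f} \<le> prob_contains mu E w {e} * prob_contains mu E w {f}"
    using r w ef by (simp add: rayleigh_def)
  then have "prob_contains mu E w {e, f} * Z * Z \<le> (prob_contains mu E w {e} * Z) * (prob_contains mu E w {f} * Z)"
    using Zpos by (simp add: mult_right_mono)
  then have "w e * w f * (Aef * Z) \<le> w e * w f * ((Ae + w f * Aef) * (Af + w e * Aef))"
    unfolding Pef Pe Pf by (simp add: algebra_simps)
  then have "Aef * Z \<le> (Ae + w f * Aef) * (Af + w e * Aef)"
    using we by simp
  then show ?thesis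
    unfolding Z E_minus(3) by (simp add: A0_def Ae_def Af_def Aef_def algebra_simps)
qed

lemma rayleigh_cross:
  assumes m: "is_measure mu E" "mu {} > 0" and r: "rayleigh mu E"
    and ef: "e \<in> E" "f \<in> E" "e \<noteq> f" and w: "\<And>x. x \<in> E \<Longrightarrow> w x \<ge> 0"
  shows "wsum mu (E - {e, f}) w * wsum (\<lambda>F. mu (insert e (insert f F))) (E - {e, f}) w
       \<le> wsum (\<lambda>F. mu (insert e F)) (E - {e, f}) w * wsum (\<lambda>F. mu (insert f F)) (E - {e, f}) w"
proof -
  let ?cross = "\<lambda>u. wsum mu (E - {e, f}) u * wsum (\<lambda>F. mu (insert e (insert f F))) (E - {e, f}) u"
  let ?prod = "\<lambda>u. wsum (\<lambda>F. mu (insert e F)) (E - {e, f}) u * wsum (\<lambda>F. mu (insert f F)) (E - {e, f}) u"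
  have lim: "((\<lambda>\<epsilon>. wsum g (E - {e, f}) (\<lambda>x. w x + \<epsilon>)) \<longlongrightarrow> wsum g (E - {e, f}) w) (at_right 0)" for g
    using tendsto_wsum[of g _ 1 w] by simp
  have "eventually (\<lambda>\<epsilon>. ?cross (\<lambda>x. w x + \<epsilon>) \<le> ?prod (\<lambda>x. w x + \<epsilon>)) (at_right 0)"
    using eventually_at_right_less[of "0::real"]
  proof (rule eventually_mono)
    fix \<epsilon> :: real assume "0 < \<epsilon>"
    then have "pos_weights E (\<lambda>x. w x + \<epsilon>)"
      using w by (auto simp: pos_weights_def add_nonneg_pos)
    then show "?cross (\<lambda>x. w x + \<epsilon>) \<le> ?prod (\<lambda>x. w x + \<epsilon>)"
      by (rule rayleigh_cross_pos[OF m r ef])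
  qed
  then show ?thesis
    by (rule tendsto_le[OF trivial_limit_at_right_real tendsto_mult[OF lim lim] tendsto_mult[OF lim lim]])
qed

lemma cavity_ratio_cong:
  "(\<And>x. x \<in> E - {e} \<Longrightarrow> v x = v' x) \<Longrightarrow> cavity_ratio mu E e v = cavity_ratio mu E e v'"
  unfolding cavity_ratio_eq_wsum by (metis (no_types, lifting) wsum_cong)

lemma cavity_ratio_antitone_single:
  assumes m: "is_measure mu E" "mu {} > 0" and r: "rayleigh mu E"
    and ef: "e \<in> E" "f \<in> E" "e \<noteq> f"
    and v: "\<And>x. x \<in> E \<Longrightarrow> v x \<ge> 0" and v': "\<And>x. x \<in> E \<Longrightarrow> v' x \<ge> 0"
    and agree: "\<And>x. x \<in> E \<Longrightarrow> x \<noteq> f \<Longrightarrow> v x = v' x" and le: "v f \<le> v' f"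
  shows "cavity_ratio mu E e v' \<le> cavity_ratio mu E e v"
proof -
  define A where "A = E - {e, f}"
  define A0 where "A0 = wsum mu A v"
  define Ae where "Ae = wsum (\<lambda>F. mu (insert e F)) A v"
  define Af where "Af = wsum (\<lambda>F. mu (insert f F)) A v"
  define Aef where "Aef = wsum (\<lambda>F. mu (insert e (insert f F))) A v"
  have fin: "finite E" using m by (simp add: is_measure_def)
  have A: "finite A" "f \<notin> A" using fin by (auto simp: A_def)
  have E_minus: "E - {e} = insert f A" using ef by (auto simp: A_def)
  have same_on_A: "wsum g A v' = wsum g A v" for g
    using agree by (intro wsum_cong) (auto simp: A_def)
  \<comment> \<open>As a function of the single weight u_f the cavity ratio is the Moebius map
      (Ae + u_f Aef) / (A0 + u_f Af), which is antitone because A0 Aef <= Ae Af.\<close>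
  have ratio: "cavity_ratio mu E e u = (Ae + u f * Aef) / (A0 + u f * Af)"
    if "u = v \<or> u = v'" for u
    using that unfolding cavity_ratio_eq_wsum E_minus
    by (auto simp: wsum_insert[OF A] same_on_A A0_def Ae_def Af_def Aef_def insert_commute)
  have denom_pos: "A0 + u f * Af > 0" if "u = v \<or> u = v'" for u
  proof -
    have "wsum mu (E - {e}) u > 0"
      using m that v v' by (intro wsum_pos) (auto simp: is_measure_def)
    then show ?thesis
      using that unfolding E_minus by (auto simp: wsum_insert[OF A] same_on_A A0_def Af_def)
  qed
  have cross: "A0 * Aef \<le> Ae * Af"
    using rayleigh_cross[OF m r ef v] by (simp add: A0_def Ae_def Af_def Aef_def A_def)
  have "(Ae + v' f * Aef) * (A0 + v f * Af) \<le> (Ae + v f * Aef) * (A0 + v' f * Af)"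
  proof -
    have "(Ae + v f * Aef) * (A0 + v' f * Af) - (Ae + v' f * Aef) * (A0 + v f * Af)
        = (v' f - v f) * (Ae * Af - A0 * Aef)"
      by (simp add: algebra_simps)
    moreover have "(v' f - v f) * (Ae * Af - A0 * Aef) \<ge> 0" using le cross by simp
    ultimately show ?thesis by linarith
  qed
  then show ?thesis
    using denom_pos[of v] denom_pos[of v'] by (simp add: ratio divide_simps)
qed

lemma cavity_ratio_antitone:
  assumes m: "is_measure mu E" "mu {} > 0" and r: "rayleigh mu E" and e: "e \<in> E"
    and v: "\<And>x. x \<in> E \<Longrightarrow> v x \<ge> 0" and le: "\<And>x. x \<in> E \<Longrightarrow> v x \<le> v' x"
  shows "cavity_ratio mu E e v' \<le> cavity_ratio mu E e v"
proof -
  \<comment> \<open>Raise the weights from v to v' one edge at a time: u S uses v' on S and v elsewhere.\<close>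
  define u where "u S = (\<lambda>x. if x \<in> S then v' x else v x)" for S
  have fin: "finite E" using m by (simp add: is_measure_def)
  have u_nonneg: "\<And>x. x \<in> E \<Longrightarrow> 0 \<le> u S x" for S
    using v le by (auto simp: u_def intro: order_trans)
  have "finite S \<Longrightarrow> S \<subseteq> E - {e} \<Longrightarrow> cavity_ratio mu E e (u S) \<le> cavity_ratio mu E e v" for S
  proof (induction S rule: finite_induct)
    case empty
    then show ?case by (simp add: u_def)
  next
    case (insert f S)
    have "cavity_ratio mu E e (u (insert f S)) \<le> cavity_ratio mu E e (u S)"
      using insert.prems insert.hyps(2) le
      by (intro cavity_ratio_antitone_single[OF m r e _ _ u_nonneg u_nonneg]) (auto simp: u_def)
    also have "\<dots> \<le> cavity_ratio mu E e v" using insert by simp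
    finally show ?case .
  qed
  then have "cavity_ratio mu E e (u (E - {e})) \<le> cavity_ratio mu E e v" using fin by simp
  moreover have "cavity_ratio mu E e (u (E - {e})) = cavity_ratio mu E e v'"
    by (rule cavity_ratio_cong) (simp add: u_def)
  ultimately show ?thesis by simp
qed

section \<open>Size-increasing measures: x \<Gamma>(x v) is nondecreasing\<close>

text \<open>With D, C the weighted sums over E - {e} of \<mu>(G) and \<mu>(G + e), and Dk, Ck the
  same sums weighted by |G|, the size-increasing inequality at e reads
  C Dk < (Ck + C) D after clearing the denominator Z = D + w_e C.\<close>
lemma size_increasing_cross:
  assumes m: "is_measure mu E" "mu {} > 0" and si: "size_increasing mu E" and e: "e \<in> E"
    and w: "pos_weights E w"
  shows "wsum (\<lambda>F. real (card F) * mu F) (E - {e}) w * wsum (\<lambda>F. mu (insert e F)) (E - {e}) w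
       < (wsum (\<lambda>F. real (card F) * mu (insert e F)) (E - {e}) w + wsum (\<lambda>F. mu (insert e F)) (E - {e}) w)
         * wsum mu (E - {e}) w"
proof -
  define A where "A = E - {e}"
  define D where "D = wsum mu A w"
  define C where "C = wsum (\<lambda>F. mu (insert e F)) A w"
  define Dk where "Dk = wsum (\<lambda>F. real (card F) * mu F) A w"
  define Ck where "Ck = wsum (\<lambda>F. real (card F) * mu (insert e F)) A w"
  define Z where "Z = partfun mu E w"
  have fin: "finite E" using m by (simp add: is_measure_def)
  have A: "finite A" "e \<notin> A" using fin by (auto simp: A_def)
  have E_eq: "E = insert e A" using e by (auto simp: A_def)
  have card_insert: "\<And>F. F \<subseteq> A \<Longrightarrow> card (insert e F) = card F + 1"
    using A by (metis Suc_eq_plus1 card_insert_disjoint in_mono rev_finite_subset)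
  have we: "w e > 0" using w e by (simp add: pos_weights_def)
  have Zpos: "Z > 0"
    unfolding Z_def partfun_eq_wsum using m w
    by (intro wsum_pos) (auto simp: is_measure_def pos_weights_def less_imp_le)
  have expect_Z: "expect mu E w g * Z = wsum (\<lambda>F. g F * mu F) (insert e A) w" for g
    using Zpos by (simp add: expect_eq_wsum Z_def E_eq[symmetric])
  have Z: "Z = D + w e * C"
    unfolding Z_def partfun_eq_wsum E_eq wsum_insert[OF A] by (simp add: D_def C_def)
  have size_on_e: "expect mu E w (\<lambda>F. real (card F) * (if e \<in> F then 1 else 0)) * Z = w e * (Ck + C)"
  proof -
    have "wsum (\<lambda>F. real (card F) * (if e \<in> F then 1 else 0) * mu F) A w = wsum (\<lambda>F. 0) A w"
      using A by (intro wsum_cong) auto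
    moreover have "wsum (\<lambda>F. real (card (insert e F)) * (if e \<in> insert e F then 1 else 0) * mu (insert e F)) A w
        = wsum (\<lambda>F. real (card F) * mu (insert e F) + mu (insert e F)) A w"
      by (intro wsum_cong) (auto simp: card_insert algebra_simps)
    ultimately show ?thesis
      unfolding expect_Z wsum_insert[OF A] by (simp add: wsum_zero wsum_add Ck_def C_def)
  qed
  have size: "expect mu E w (\<lambda>F. real (card F)) * Z = Dk + w e * (Ck + C)"
  proof -
    have "wsum (\<lambda>F. real (card (insert e F)) * mu (insert e F)) A w
        = wsum (\<lambda>F. real (card F) * mu (insert e F) + mu (insert e F)) A w"
      by (intro wsum_cong) (auto simp: card_insert algebra_simps)
    then show ?thesis
      unfolding expect_Z wsum_insert[OF A] by (simp add: wsum_add Dk_def Ck_def C_def)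
  qed
  have prob_e: "prob_contains mu E w {e} * Z = w e * C"
    using fin e Zpos by (simp add: prob_contains_eq_wsum Z_def wpow_def C_def A_def)
  let ?size = "expect mu E w (\<lambda>F. real (card F))"
  let ?size_on_e = "expect mu E w (\<lambda>F. real (card F) * (if e \<in> F then 1 else 0))"
  let ?prob_e = "prob_contains mu E w {e}"
  have "?size * ?prob_e < ?size_on_e"
    using si w e by (simp add: size_increasing_def)
  then have "?size * ?prob_e * (Z * Z) < ?size_on_e * (Z * Z)"
    using Zpos by (simp add: mult_strict_right_mono)
  moreover have "?size * ?prob_e * (Z * Z) = (?size * Z) * (?prob_e * Z)"
    and "?size_on_e * (Z * Z) = (?size_on_e * Z) * Z"
    by algebra+
  ultimately have "(?size * Z) * (?prob_e * Z) < (?size_on_e * Z) * Z"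
    by simp
  then have "w e * (Dk * C) < w e * ((Ck + C) * D)"
    unfolding size_on_e size prob_e by (simp add: Z algebra_simps)
  then show ?thesis
    using we by (simp add: D_def C_def Dk_def Ck_def A_def)
qed

lemma wsum_scaled_has_derivative:
  assumes A: "finite A" and x: "x > 0"
  shows "((\<lambda>s. wsum g A (\<lambda>y. s * v y)) has_field_derivative
           wsum (\<lambda>F. real (card F) * g F) A (\<lambda>y. x * v y) / x) (at x)"
proof -
  have poly: "wsum h A (\<lambda>y. s * v y) = (\<Sum>F\<in>Pow A. h F * wpow v F * s ^ card F)" for h s
    unfolding wsum_def using A
    by (intro sum.cong refl) (auto simp: wpow_scale dest: rev_finite_subset)
  have term_deriv: "real n * x ^ (n - Suc 0) = real n * x ^ n / x" for n
    using x by (cases n) auto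
  have "((\<lambda>s. \<Sum>F\<in>Pow A. g F * wpow v F * s ^ card F) has_field_derivative
          (\<Sum>F\<in>Pow A. g F * wpow v F * (real (card F) * x ^ (card F - Suc 0)))) (at x)"
    by (intro DERIV_sum DERIV_cmult DERIV_pow)
  moreover have "(\<Sum>F\<in>Pow A. g F * wpow v F * (real (card F) * x ^ (card F - Suc 0)))
      = wsum (\<lambda>F. real (card F) * g F) A (\<lambda>y. x * v y) / x"
    unfolding poly term_deriv sum_divide_distrib by (simp add: algebra_simps)
  ultimately show ?thesis unfolding poly by simp
qed

lemma scaled_cavity_ratio_mono_pos:
  assumes m: "is_measure mu E" "mu {} > 0" and si: "size_increasing mu E" and e: "e \<in> E"
    and v: "\<And>x. x \<in> E \<Longrightarrow> v x > 0" and st: "0 < s" "s \<le> t"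
  shows "s * cavity_ratio mu E e (\<lambda>y. s * v y) \<le> t * cavity_ratio mu E e (\<lambda>y. t * v y)"
proof -
  define A where "A = E - {e}"
  define C where "C x = wsum (\<lambda>F. mu (insert e F)) A (\<lambda>y. x * v y)" for x
  define D where "D x = wsum mu A (\<lambda>y. x * v y)" for x
  define Ck where "Ck x = wsum (\<lambda>F. real (card F) * mu (insert e F)) A (\<lambda>y. x * v y)" for x
  define Dk where "Dk x = wsum (\<lambda>F. real (card F) * mu F) A (\<lambda>y. x * v y)" for x
  define \<phi> where "\<phi> x = x * C x / D x" for x
  have fin: "finite A" using m by (simp add: is_measure_def A_def)
  have D_pos: "D x > 0" if "x > 0" for x
    unfolding D_def using m v that
    by (intro wsum_pos) (auto simp: is_measure_def A_def less_imp_le fin)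
  \<comment> \<open>The derivative of x \<mapsto> x C(x) / D(x) has numerator (C + Ck) D - C Dk,
      which is positive exactly by the size-increasing property at weights x v.\<close>
  have \<phi>_deriv: "(\<phi> has_field_derivative ((C x + Ck x) * D x - C x * Dk x) / (D x * D x)) (at x)"
    if x: "x > 0" for x
  proof -
    have "(\<phi> has_field_derivative ((1 * C x + Ck x / x * x) * D x - x * C x * (Dk x / x)) / (D x * D x)) (at x)"
      unfolding \<phi>_def[abs_def] C_def D_def Ck_def Dk_def using D_pos[OF x]
      by (intro DERIV_divide DERIV_mult DERIV_ident wsum_scaled_has_derivative fin x)
        (simp add: D_def)
    then show ?thesis using x by simp
  qed
  have "\<phi> s \<le> \<phi> t"
  proof (rule DERIV_nonneg_imp_increasing_open[OF st(2)])
    fix x assume "s < x" "x < t"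
    then have x: "x > 0" using st by simp
    have "pos_weights E (\<lambda>y. x * v y)" using v x by (simp add: pos_weights_def)
    then have "C x * Dk x < (Ck x + C x) * D x"
      using size_increasing_cross[OF m si e] by (simp add: A_def C_def D_def Ck_def Dk_def mult.commute)
    then have "((C x + Ck x) * D x - C x * Dk x) / (D x * D x) \<ge> 0"
      using D_pos[OF x] by (simp add: algebra_simps)
    then show "\<exists>y. (\<phi> has_field_derivative y) (at x) \<and> 0 \<le> y"
      using \<phi>_deriv[OF x] by blast
  next
    show "continuous_on {s..t} \<phi>"
      using st by (intro continuous_at_imp_continuous_on ballI DERIV_isCont[OF \<phi>_deriv]) auto
  qed
  then show ?thesis
    unfolding \<phi>_def C_def D_def cavity_ratio_eq_wsum A_def by (simp add: times_divide_eq_right)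
qed

lemma scaled_cavity_ratio_mono:
  assumes m: "is_measure mu E" "mu {} > 0" and si: "size_increasing mu E" and e: "e \<in> E"
    and v: "\<And>x. x \<in> E \<Longrightarrow> v x \<ge> 0" and st: "0 < s" "s \<le> t"
  shows "s * cavity_ratio mu E e (\<lambda>y. s * v y) \<le> t * cavity_ratio mu E e (\<lambda>y. t * v y)"
proof -
  have lim: "((\<lambda>\<epsilon>. a * cavity_ratio mu E e (\<lambda>y. a * (v y + \<epsilon>)))
               \<longlongrightarrow> a * cavity_ratio mu E e (\<lambda>y. a * v y)) (at_right 0)"
    if a: "a > 0" for a
  proof -
    have "wsum mu (E - {e}) (\<lambda>y. a * v y) > 0"
      using m v a by (intro wsum_pos) (auto simp: is_measure_def)
    then show ?thesis unfolding cavity_ratio_eq_wsum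
      by (intro tendsto_mult tendsto_const tendsto_divide tendsto_wsum) simp
  qed
  have "eventually (\<lambda>\<epsilon>. s * cavity_ratio mu E e (\<lambda>y. s * (v y + \<epsilon>))
                       \<le> t * cavity_ratio mu E e (\<lambda>y. t * (v y + \<epsilon>))) (at_right 0)"
    using eventually_at_right_less[of "0::real"]
  proof (rule eventually_mono)
    fix \<epsilon> :: real assume "0 < \<epsilon>"
    then have "\<And>x. x \<in> E \<Longrightarrow> v x + \<epsilon> > 0" using v by (simp add: add_nonneg_pos)
    then show "s * cavity_ratio mu E e (\<lambda>y. s * (v y + \<epsilon>)) \<le> t * cavity_ratio mu E e (\<lambda>y. t * (v y + \<epsilon>))"
      using scaled_cavity_ratio_mono_pos[OF m si e _ st, of "\<lambda>y. v y + \<epsilon>"] by simp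
  qed
  then show ?thesis
    using st by (intro tendsto_le[OF trivial_limit_at_right_real lim lim]) auto
qed

section \<open>The cavity operator of a cavity-monotone network\<close>

lemma inc_edge:
  assumes "simple_lf_graph adj" "e' \<in> inc_edges adj i"
  obtains k where "adj i k" "adj k i" "the_elem (e' - {i}) = k"
proof -
  from assms(2) obtain k where k: "e' = {i, k}" "adj i k" by (auto simp: inc_edges_def)
  have "k \<noteq> i" using assms(1) k(2) by (auto simp: simple_lf_graph_def)
  then have "e' - {i} = {k}" using k(1) by auto
  then show ?thesis using that k assms(1) by (auto simp: simple_lf_graph_def)
qed

lemma edge_in_inc_edges: "adj i j \<Longrightarrow> {i, j} \<in> inc_edges adj i"
  by (auto simp: inc_edges_def)

lemma configuration_weights_nonneg:
  assumes "simple_lf_graph adj" "configuration adj x" "e' \<in> inc_edges adj i"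
  shows "x (the_elem (e' - {i})) i \<ge> 0"
  using assms(3) by (rule inc_edge[OF assms(1)]) (use assms(2) in \<open>auto simp: configuration_def\<close>)

lemma cavity_op_antitone:
  assumes G: "cavity_monotone_network adj mu" and x: "configuration adj x"
    and le: "\<And>a b. adj a b \<Longrightarrow> x a b \<le> y a b" and ij: "adj i j"
  shows "cavity_op adj mu y i j \<le> cavity_op adj mu x i j"
proof -
  have g: "simple_lf_graph adj" and cm: "cavity_monotone (mu i) (inc_edges adj i)"
    using G by (auto simp: cavity_monotone_network_def)
  show ?thesis unfolding cavity_op_def
  proof (rule cavity_ratio_antitone)
    show "is_measure (mu i) (inc_edges adj i)" "0 < mu i {}" "rayleigh (mu i) (inc_edges adj i)"
      using cm by (auto simp: cavity_monotone_def)
    show "{i, j} \<in> inc_edges adj i" using ij by (rule edge_in_inc_edges)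
    show "\<And>e'. e' \<in> inc_edges adj i \<Longrightarrow> 0 \<le> x (the_elem (e' - {i})) i"
      using configuration_weights_nonneg[OF g x] .
    show "\<And>e'. e' \<in> inc_edges adj i \<Longrightarrow> x (the_elem (e' - {i})) i \<le> y (the_elem (e' - {i})) i"
      by (erule inc_edge[OF g]) (use le in auto)
  qed
qed

lemma scaled_cavity_op_mono:
  assumes G: "cavity_monotone_network adj mu" and x: "configuration adj x"
    and st: "0 < s" "s \<le> t" and ij: "adj i j"
  shows "s * cavity_op adj mu (\<lambda>a b. s * x a b) i j \<le> t * cavity_op adj mu (\<lambda>a b. t * x a b) i j"
proof -
  have g: "simple_lf_graph adj" and cm: "cavity_monotone (mu i) (inc_edges adj i)"
    using G by (auto simp: cavity_monotone_network_def)
  show ?thesis unfolding cavity_op_def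
  proof (rule scaled_cavity_ratio_mono[OF _ _ _ _ _ st])
    show "is_measure (mu i) (inc_edges adj i)" "0 < mu i {}" "size_increasing (mu i) (inc_edges adj i)"
      using cm by (auto simp: cavity_monotone_def)
    show "{i, j} \<in> inc_edges adj i" using ij by (rule edge_in_inc_edges)
    show "\<And>e'. e' \<in> inc_edges adj i \<Longrightarrow> 0 \<le> x (the_elem (e' - {i})) i"
      using configuration_weights_nonneg[OF g x] .
  qed
qed

section \<open>Comparison of the solutions at two activities\<close>

lemma cavity_iterates_sandwich:
  assumes G: "cavity_monotone_network adj mu" and x0: "solves_cavity_eq adj mu s x0"
    and st: "0 < s" "s \<le> t" and ab: "adj a b"
  shows "x0 a b \<le> (((\<lambda>z a b. t * cavity_op adj mu z a b) ^^ n) x0) a b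
       \<and> (((\<lambda>z a b. t * cavity_op adj mu z a b) ^^ n) x0) a b \<le> t / s * x0 a b"
proof -
  define T where "T = (\<lambda>z a b. t * cavity_op adj mu z a b)"
  define c where "c = t / s"
  have c: "c \<ge> 1" using st by (simp add: c_def)
  have conf0: "configuration adj x0" using x0 by (simp add: solves_cavity_eq_def)
  have fix0: "\<And>a b. adj a b \<Longrightarrow> s * cavity_op adj mu x0 a b = x0 a b"
    using x0 by (simp add: solves_cavity_eq_def)
  have x0_nonneg: "\<And>a b. adj a b \<Longrightarrow> x0 a b \<ge> 0"
    using conf0 by (simp add: configuration_def)
  \<comment> \<open>T maps the order interval [x0, c x0] into itself: T x0 = c x0, and
      T (c x0) \<ge> x0 because c \<Gamma>(c x0) \<ge> \<Gamma>(x0); T is antitone.\<close>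
  have invariant: "x0 a b \<le> T y a b \<and> T y a b \<le> c * x0 a b"
    if y: "\<And>a b. adj a b \<Longrightarrow> x0 a b \<le> y a b \<and> y a b \<le> c * x0 a b" and ab: "adj a b" for y a b
  proof
    have y_conf: "configuration adj y"
      unfolding configuration_def using y x0_nonneg by (meson order_trans)
    have "x0 a b = s * cavity_op adj mu x0 a b" using fix0[OF ab] by simp
    also have "\<dots> \<le> s * (c * cavity_op adj mu (\<lambda>a b. c * x0 a b) a b)"
      using scaled_cavity_op_mono[OF G conf0 _ c ab] st c by (simp add: mult_left_mono)
    also have "\<dots> = t * cavity_op adj mu (\<lambda>a b. c * x0 a b) a b"
      using st by (simp add: c_def)
    also have "\<dots> \<le> T y a b"
      unfolding T_def using st y by (intro mult_left_mono cavity_op_antitone[OF G y_conf _ ab]) auto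
    finally show "x0 a b \<le> T y a b" .
    have "T y a b \<le> t * cavity_op adj mu x0 a b"
      unfolding T_def using st y by (intro mult_left_mono cavity_op_antitone[OF G conf0 _ ab]) auto
    also have "\<dots> = c * x0 a b"
      using fix0[OF ab, symmetric] st by (simp add: c_def)
    finally show "T y a b \<le> c * x0 a b" .
  qed
  have "\<forall>a b. adj a b \<longrightarrow> x0 a b \<le> (T ^^ n) x0 a b \<and> (T ^^ n) x0 a b \<le> c * x0 a b"
  proof (induction n)
    case 0
    show ?case using c x0_nonneg by (simp add: mult_le_cancel_right1) (meson not_le)
  next
    case (Suc n)
    then show ?case using invariant[of "(T ^^ n) x0"] by simp
  qed
  then show ?thesis using ab by (simp add: T_def c_def)
qed

lemma solution_bounds:
  assumes G: "cavity_monotone_network adj mu"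
    and sol: "\<And>t. t > 0 \<Longrightarrow> solves_cavity_eq adj mu t (xs t) \<and> globally_attractive adj mu t (xs t)"
    and st: "0 < s" "s \<le> t" and ij: "adj i j"
  shows "s / t * xs t i j \<le> xs s i j \<and> xs s i j \<le> xs t i j"
proof -
  let ?iter = "\<lambda>n. (((\<lambda>z a b. t * cavity_op adj mu z a b) ^^ n) (xs s)) i j"
  have t: "t > 0" using st by simp
  have xs_s: "solves_cavity_eq adj mu s (xs s)" using sol[OF st(1)] by simp
  have lim: "?iter \<longlonglongrightarrow> xs t i j"
    using sol[OF t] xs_s ij unfolding globally_attractive_def solves_cavity_eq_def by blast
  have bounds: "xs s i j \<le> ?iter n \<and> ?iter n \<le> t / s * xs s i j" for n
    by (rule cavity_iterates_sandwich[OF G xs_s st ij])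
  have lower: "xs s i j \<le> xs t i j"
    by (rule LIMSEQ_le_const[OF lim]) (use bounds in blast)
  have upper: "xs t i j \<le> t / s * xs s i j"
    by (rule LIMSEQ_le_const2[OF lim]) (use bounds in blast)
  have "s / t * xs t i j \<le> s / t * (t / s * xs s i j)"
    using upper st by (intro mult_left_mono) auto
  then show ?thesis using lower st by simp
qed

text \<open>A function with (s/t) f(t) \<le> f(s) \<le> f(t) for 0 < s \<le> t is locally Lipschitz,
  hence continuous, on (0, \<infinity>).\<close>
lemma continuous_on_from_ratio_bounds:
  fixes f :: "real \<Rightarrow> real"
  assumes bounds: "\<And>s t. 0 < s \<Longrightarrow> s \<le> t \<Longrightarrow> s / t * f t \<le> f s \<and> f s \<le> f t"
  shows "continuous_on {0<..} f"
proof -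
  have "isCont f t0" if t0: "t0 > 0" for t0
  proof -
    have lipschitz: "\<bar>f t - f t0\<bar> \<le> \<bar>t - t0\<bar> / t0 * f t0" if t: "t > 0" for t
    proof (cases "t0 \<le> t")
      case True
      then have "t0 / t * f t \<le> f t0" and incr: "f t0 \<le> f t" using bounds[OF t0] by auto
      then have "f t \<le> t / t0 * f t0" using t t0 by (simp add: field_simps)
      then have "f t - f t0 \<le> (t - t0) / t0 * f t0" using t0 by (simp add: field_simps)
      then show ?thesis using True incr by simp
    next
      case False
      then have "t / t0 * f t0 \<le> f t" and decr: "f t \<le> f t0" using bounds[OF t] by auto
      then have "f t0 - f t \<le> (t0 - t) / t0 * f t0" using t0 by (simp add: field_simps)
      then show ?thesis using False decr by simp
    qed
    have "((\<lambda>t. \<bar>t - t0\<bar> / t0 * f t0) \<longlongrightarrow> \<bar>t0 - t0\<bar> / t0 * f t0) (at t0)"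
      by (intro tendsto_intros) (use t0 in auto)
    then have bound_lim: "((\<lambda>t. \<bar>t - t0\<bar> / t0 * f t0) \<longlongrightarrow> 0) (at t0)" by simp
    have near: "eventually (\<lambda>t. t > 0) (at t0)"
      using order_tendstoD(1)[OF tendsto_ident_at t0] .
    have "((\<lambda>t. \<bar>f t - f t0\<bar>) \<longlongrightarrow> 0) (at t0)"
      by (rule tendsto_sandwich[OF _ _ tendsto_const bound_lim])
        (use near lipschitz in \<open>auto elim: eventually_mono\<close>)
    then have "((\<lambda>t. f t - f t0) \<longlongrightarrow> 0) (at t0)" by (rule tendsto_rabs_zero_cancel)
    then have "(f \<longlongrightarrow> f t0) (at t0)" by (rule LIM_zero_cancel)
    then show ?thesis by (simp add: isCont_def)
  qed
  then show ?thesis by (simp add: continuous_on_eq_continuous_at)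
qed

text \<open>Only existence and global attractivity of x(t) are used.\<close>
theorem mainTheorem10:
  fixes adj :: "'v::countable \<Rightarrow> 'v \<Rightarrow> bool"
    and mu :: "'v \<Rightarrow> 'v set set \<Rightarrow> real"
    and xs :: "real \<Rightarrow> 'v \<Rightarrow> 'v \<Rightarrow> real"
  assumes "cavity_monotone_network adj mu"
    and "\<And>t. t > 0 \<Longrightarrow> solves_cavity_eq adj mu t (xs t) \<and> globally_attractive adj mu t (xs t)"
    and "\<And>t y. t > 0 \<Longrightarrow> solves_cavity_eq adj mu t y \<Longrightarrow> globally_attractive adj mu t y \<Longrightarrow>
           (\<forall>i j. adj i j \<longrightarrow> y i j = xs t i j)"
  shows "(\<forall>s t i j. 0 < s \<and> s \<le> t \<and> adj i j \<longrightarrow>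
            s / t * xs t i j \<le> xs s i j \<and> xs s i j \<le> xs t i j)
       \<and> (\<forall>i j. adj i j \<longrightarrow> continuous_on {0<..} (\<lambda>t. xs t i j))"
proof -
  have bounds: "s / t * xs t i j \<le> xs s i j \<and> xs s i j \<le> xs t i j"
    if "0 < s" "s \<le> t" "adj i j" for s t i j
    using solution_bounds[OF assms(1,2) that] .
  have "continuous_on {0<..} (\<lambda>t. xs t i j)" if "adj i j" for i j
    using bounds that by (intro continuous_on_from_ratio_bounds) blast
  then show ?thesis using bounds by blast
qed

end
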